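(* Let $G$ be a nontrivial finite subgroup of $\mathrm{SO}(3)$ and let $g:\mathrm{SO}(3)\to\mathbb{R}^n$ be an embedding. Then there does not exist a continuous function $f:\mathrm{SO}(3)/G\to g[\mathrm{SO}(3)]$ such that $p_G(g^{-1}(f(\mathcal{R})))=\mathcal{R}$ for every $\mathcal{R}\in\mathrm{SO}(3)/G$.
   Context: $\mathrm{SO}(3)/G$ denotes the space of left cosets $RG$ ($R\in\mathrm{SO}(3)$) with the quotient topology, and $p_G:\mathrm{SO}(3)\to\mathrm{SO}(3)/G$, $R\mapsto RG$, is the quotient map. An embedding is a continuous injective map that is a homeomorphism onto its image $g[\mathrm{SO}(3)]$. *)

theory Defs
  imports "HOL-Analysis.Analysis"
begin

definition SO3 :: "(real^3^3) set" where
  "SO3 = {R. orthogonal_matrix R \<and> det R = 1}"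

definition SO3_top :: "(real^3^3) topology" where
  "SO3_top = subtopology euclidean SO3"

definition subgroup_SO3 :: "(real^3^3) set \<Rightarrow> bool" where
  "subgroup_SO3 G \<longleftrightarrow> G \<subseteq> SO3 \<and> mat 1 \<in> G \<and>
     (\<forall>A\<in>G. \<forall>B\<in>G. A ** B \<in> G) \<and> (\<forall>A\<in>G. matrix_inv A \<in> G)"

definition pG :: "(real^3^3) set \<Rightarrow> real^3^3 \<Rightarrow> (real^3^3) set" where
  "pG G R = {R ** A | A. A \<in> G}"

definition quotient_topology :: "'a topology \<Rightarrow> ('a \<Rightarrow> 'b) \<Rightarrow> 'b topology" where
  "quotient_topology X p =
     topology (\<lambda>U. U \<subseteq> p ` topspace X \<and> openin X {x \<in> topspace X. p x \<in> U})"

lemma istopology_quotient: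
  "istopology (\<lambda>U. U \<subseteq> p ` topspace X \<and> openin X {x \<in> topspace X. p x \<in> U})"
  unfolding istopology_def
proof (rule conjI, (rule allI)+, (rule impI)+)
  fix S T assume a: "S \<subseteq> p ` topspace X \<and> openin X {x \<in> topspace X. p x \<in> S}"
    "T \<subseteq> p ` topspace X \<and> openin X {x \<in> topspace X. p x \<in> T}"
  have e: "{x \<in> topspace X. p x \<in> S \<inter> T} =
        {x \<in> topspace X. p x \<in> S} \<inter> {x \<in> topspace X. p x \<in> T}" by blast
  have "openin X ({x \<in> topspace X. p x \<in> S} \<inter> {x \<in> topspace X. p x \<in> T})"
    using a by (intro openin_Int) simp_all
  moreover have "S \<inter> T \<subseteq> p ` topspace X" using a by blast
  ultimately show "S \<inter> T \<subseteq> p ` topspace X \<and> openin X {x \<in> topspace X. p x \<in> S \<inter> T}"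
    unfolding e by blast
next
  show "\<forall>K. (\<forall>S\<in>K. S \<subseteq> p ` topspace X \<and> openin X {x \<in> topspace X. p x \<in> S}) \<longrightarrow>
     \<Union>K \<subseteq> p ` topspace X \<and> openin X {x \<in> topspace X. p x \<in> \<Union>K}"
  proof (rule allI, rule impI)
  fix K assume a: "\<forall>S\<in>K. S \<subseteq> p ` topspace X \<and> openin X {x \<in> topspace X. p x \<in> S}"
  have e: "{x \<in> topspace X. p x \<in> \<Union>K} = (\<Union>S\<in>K. {x \<in> topspace X. p x \<in> S})" by blast
  have "openin X (\<Union>S\<in>K. {x \<in> topspace X. p x \<in> S})"
    using a by (intro openin_Union) blast
  moreover have "\<Union>K \<subseteq> p ` topspace X" using a by blast
  ultimately show "\<Union>K \<subseteq> p ` topspace X \<and> openin X {x \<in> topspace X. p x \<in> \<Union>K}"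
    unfolding e by blast
  qed
qed

lemma openin_quotient_topology:
  "openin (quotient_topology X p) U \<longleftrightarrow>
     U \<subseteq> p ` topspace X \<and> openin X {x \<in> topspace X. p x \<in> U}"
  unfolding quotient_topology_def topology_inverse'[OF istopology_quotient] ..

definition SO3_mod :: "(real^3^3) set \<Rightarrow> ((real^3^3) set) topology" where
  "SO3_mod G = quotient_topology SO3_top (pG G)"

end

theory Submission
  imports Defs
begin

text \<open>Composing a continuous f as in the statement with g^-1 and p_G yields a continuous
  F : SO(3) \<rightarrow> SO(3) that is constant on the cosets RG and satisfies F R \<in> RG. Then
  R \<mapsto> R^T F R is a continuous map from the connected space SO(3) into the finite set G,
  hence constant, say equal to A, so F R = RA. For B \<in> G with B \<noteq> 1 we get
  BA = F B = F 1 = A, forcing B = 1. Connectedness of SO(3) comes from Euler angles: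
  SO(3) is the image of \<real>^3 under (a, b, c) \<mapsto> R_z(a) R_x(b) R_z(c).\<close>

lemma topspace_quotient_topology: "topspace (quotient_topology X p) = p ` topspace X"
proof
  show "topspace (quotient_topology X p) \<subseteq> p ` topspace X"
    using openin_quotient_topology[of X p "topspace (quotient_topology X p)"] by simp
  have "{x \<in> topspace X. p x \<in> p ` topspace X} = topspace X"
    by auto
  then have "openin (quotient_topology X p) (p ` topspace X)"
    by (simp add: openin_quotient_topology)
  then show "p ` topspace X \<subseteq> topspace (quotient_topology X p)"
    by (rule openin_subset)
qed

lemma continuous_map_quotient_topology: "continuous_map X (quotient_topology X p) p"
  unfolding continuous_map_def topspace_quotient_topology openin_quotient_topology by auto

lemma continuous_map_inv_into_embedding:
  assumes "embedding_map X Y g"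
  shows "continuous_map (subtopology Y (g ` topspace X)) X (inv_into (topspace X) g)"
proof -
  obtain k where k: "homeomorphic_maps X (subtopology Y (g ` topspace X)) g k"
    using assms unfolding embedding_map_def homeomorphic_map_maps by blast
  then have k_cont: "continuous_map (subtopology Y (g ` topspace X)) X k"
    and k_g: "\<And>x. x \<in> topspace X \<Longrightarrow> k (g x) = x"
    unfolding homeomorphic_maps_def by auto
  then have "inj_on g (topspace X)"
    by (metis inj_on_inverseI)
  with k_g show ?thesis
    by (intro continuous_map_eq[OF k_cont]) auto
qed

lemma SO3_orthogonal:
  assumes "R \<in> SO3"
  shows "transpose R ** R = mat 1" "R ** transpose R = mat 1"
  using assms by (simp_all add: SO3_def orthogonal_matrix_def)

lemma mat_1_in_SO3: "mat 1 \<in> SO3"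
  by (simp add: SO3_def orthogonal_matrix_id)

lemma SO3_mult: "A \<in> SO3 \<Longrightarrow> B \<in> SO3 \<Longrightarrow> A ** B \<in> SO3"
  by (simp add: SO3_def orthogonal_matrix_mul det_mul)

lemma SO3_transpose: "A \<in> SO3 \<Longrightarrow> transpose A \<in> SO3"
  by (simp add: SO3_def)

lemma SO3_mult_right_cancel:
  assumes "A \<in> SO3" "B ** A = C ** A"
  shows "B = C"
  using arg_cong[OF assms(2), of "\<lambda>M. M ** transpose A"]
  by (simp add: SO3_orthogonal[OF assms(1)] flip: matrix_mul_assoc)

lemma matrix_mul_matrix_inv:
  assumes "invertible A"
  shows "A ** matrix_inv A = mat 1"
  using someI_ex[OF assms[unfolded invertible_def]] by (simp add: matrix_inv_def)

lemma pG_mat_1: "pG G (mat 1) = G"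
  by (simp add: pG_def)

lemma pG_of_mem:
  assumes G: "subgroup_SO3 G" and "B \<in> G"
  shows "pG G B = G"
proof
  show "pG G B \<subseteq> G"
    using G \<open>B \<in> G\<close> unfolding pG_def subgroup_SO3_def by auto
  have "invertible B"
    using G \<open>B \<in> G\<close> SO3_orthogonal unfolding subgroup_SO3_def invertible_def by blast
  show "G \<subseteq> pG G B"
  proof
    fix C assume "C \<in> G"
    have "C = B ** (matrix_inv B ** C)"
      by (simp add: matrix_mul_assoc matrix_mul_matrix_inv[OF \<open>invertible B\<close>])
    moreover have "matrix_inv B ** C \<in> G"
      using G \<open>B \<in> G\<close> \<open>C \<in> G\<close> unfolding subgroup_SO3_def by auto
    ultimately show "C \<in> pG G B"
      unfolding pG_def by blast
  qed
qed

lemma mem_pG_self: "mat 1 \<in> G \<Longrightarrow> R \<in> pG G R"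
  unfolding pG_def by (auto intro!: exI[of _ "mat 1"])

definition rot_z :: "real \<Rightarrow> real^3^3" where
  "rot_z a = (\<chi> i j. if i = 1 \<and> j = 1 then cos a else if i = 1 \<and> j = 2 then - sin a
     else if i = 2 \<and> j = 1 then sin a else if i = 2 \<and> j = 2 then cos a
     else if i = 3 \<and> j = 3 then 1 else 0)"

definition rot_x :: "real \<Rightarrow> real^3^3" where
  "rot_x a = (\<chi> i j. if i = 2 \<and> j = 2 then cos a else if i = 2 \<and> j = 3 then - sin a
     else if i = 3 \<and> j = 2 then sin a else if i = 3 \<and> j = 3 then cos a
     else if i = 1 \<and> j = 1 then 1 else 0)"

lemma continuous_on_if_const [continuous_intros]:
  "\<lbrakk>P \<Longrightarrow> continuous_on S f; \<not> P \<Longrightarrow> continuous_on S g\<rbrakk>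
     \<Longrightarrow> continuous_on S (\<lambda>x. if P then f x else g x)"
  by (cases P) simp_all

lemma continuous_on_rot_z: "continuous_on S rot_z"
  unfolding rot_z_def by (intro continuous_on_vec_lambda continuous_intros)

lemma continuous_on_rot_x: "continuous_on S rot_x"
  unfolding rot_x_def by (intro continuous_on_vec_lambda continuous_intros)

lemma rot_z_in_SO3: "rot_z a \<in> SO3"
  using sin_cos_squared_add3[of a]
  by (simp add: SO3_def orthogonal_matrix_def rot_z_def vec_eq_iff forall_3 sum_3
      matrix_matrix_mult_def transpose_def mat_def det_3 algebra_simps)

lemma rot_x_in_SO3: "rot_x a \<in> SO3"
  using sin_cos_squared_add3[of a]
  by (simp add: SO3_def orthogonal_matrix_def rot_x_def vec_eq_iff forall_3 sum_3
      matrix_matrix_mult_def transpose_def mat_def det_3 algebra_simps)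

lemma SO3_orthonormal_sums:
  assumes "C \<in> SO3"
  shows "(\<Sum>k\<in>UNIV. C$k$i * C$k$j) = (if i = j then 1 else 0)"
    and "(\<Sum>k\<in>UNIV. C$i$k * C$j$k) = (if i = j then 1 else 0)"
  using arg_cong[OF SO3_orthogonal(1)[OF assms], of "\<lambda>M. M$i$j"]
    arg_cong[OF SO3_orthogonal(2)[OF assms], of "\<lambda>M. M$i$j"]
  by (simp_all add: matrix_matrix_mult_def transpose_def mat_def)

lemma SO3_fixing_axis_3_eq_rot_z:
  assumes C: "C \<in> SO3" and col3: "C$1$3 = 0" "C$2$3 = 0" "C$3$3 = 1"
  obtains c where "C = rot_z c"
proof -
  note orth = SO3_orthonormal_sums[OF C]
  have "C$3$1 * C$3$1 + C$3$2 * C$3$2 + C$3$3 * C$3$3 = 1"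
    using orth(2)[of 3 3] by (simp add: sum_3)
  then have row3: "C$3$1 = 0" "C$3$2 = 0"
    using col3 sum_squares_eq_zero_iff by auto
  have c1: "C$1$1 * C$1$1 + C$2$1 * C$2$1 = 1"
    using orth(1)[of 1 1] row3 by (simp add: sum_3)
  have c2: "C$1$2 * C$1$2 + C$2$2 * C$2$2 = 1"
    using orth(1)[of 2 2] row3 by (simp add: sum_3)
  have c12: "C$1$1 * C$1$2 + C$2$1 * C$2$2 = 0"
    using orth(1)[of 1 2] row3 by (simp add: sum_3)
  have "C$1$1 * C$2$2 - C$1$2 * C$2$1 = 1"
    using C col3 row3 by (simp add: SO3_def det_3)
  with c1 c2 c12 have "(C$1$2 + C$2$1) * (C$1$2 + C$2$1) + (C$2$2 - C$1$1) * (C$2$2 - C$1$1) = 0"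
    by (simp add: algebra_simps)
  then have "C$1$2 = - C$2$1" "C$2$2 = C$1$1"
    using sum_squares_eq_zero_iff by auto
  moreover obtain t where "C$1$1 = cos t" "C$2$1 = sin t"
    using sincos_total_2pi[of "C$1$1" "C$2$1"] c1 by (auto simp: power2_eq_square)
  ultimately have "C = rot_z t"
    using col3 row3 by (simp add: vec_eq_iff forall_3 rot_z_def)
  then show thesis
    by (rule that)
qed

lemma unit_vector_spherical_coordinates:
  fixes x y z :: real
  assumes "x * x + y * y + z * z = 1"
  obtains a b where "x = sin a * sin b" "y = - cos a * sin b" "z = cos b"
proof -
  define s where "s = sqrt (x * x + y * y)"
  have s_sq: "s * s = x * x + y * y"
    unfolding s_def by (simp add: add_nonneg_nonneg)
  obtain b where b: "z = cos b" "s = sin b"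
    using sincos_total_2pi[of z s] assms s_sq by (auto simp: power2_eq_square algebra_simps)
  obtain a where "x = sin a * s" "y = - cos a * s"
  proof (cases "s = 0")
    case True
    then have "x = 0" "y = 0"
      using s_sq sum_squares_eq_zero_iff by auto
    with True show thesis
      using that[of 0] by simp
  next
    case False
    then have "x * x + y * y \<noteq> 0"
      using s_sq by (metis no_zero_divisors)
    then have "(- y / s)\<^sup>2 + (x / s)\<^sup>2 = 1"
      using s_sq by (simp add: power2_eq_square add_divide_distrib[symmetric])
    then obtain t where "- y / s = cos t" "x / s = sin t"
      using sincos_total_2pi by metis
    with False show thesis
      using that[of t] by (simp add: field_simps)
  qed
  with b show thesis
    using that by simp
qed

lemma SO3_Euler_angles:
  assumes B: "B \<in> SO3"
  obtains a b c where "B = rot_z a ** rot_x b ** rot_z c"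
proof -
  have "B$1$3 * B$1$3 + B$2$3 * B$2$3 + B$3$3 * B$3$3 = 1"
    using SO3_orthonormal_sums(1)[OF B, of 3 3] by (simp add: sum_3)
  then obtain a b where ab: "B$1$3 = sin a * sin b" "B$2$3 = - cos a * sin b" "B$3$3 = cos b"
    by (rule unit_vector_spherical_coordinates)
  define P where "P = rot_z a ** rot_x b"
  have P: "P \<in> SO3"
    unfolding P_def by (intro SO3_mult rot_z_in_SO3 rot_x_in_SO3)
  have "\<forall>k. P$k$3 = B$k$3"
    using ab unfolding P_def
    by (simp add: forall_3 rot_z_def rot_x_def matrix_matrix_mult_def sum_3)
  then have col3: "P$k$3 = B$k$3" for k
    by blast
  define C where "C = transpose P ** B"
  have C: "C \<in> SO3"
    unfolding C_def by (intro SO3_mult SO3_transpose P B)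
  have "C$i$3 = (transpose P ** P)$i$3" for i
    unfolding C_def by (simp add: matrix_matrix_mult_def col3)
  then have "C$1$3 = 0" "C$2$3 = 0" "C$3$3 = 1"
    by (simp_all add: SO3_orthogonal[OF P] mat_def)
  then obtain c where c: "C = rot_z c"
    using SO3_fixing_axis_3_eq_rot_z[OF C] by blast
  have "B = (P ** transpose P) ** B"
    by (simp add: SO3_orthogonal[OF P])
  also have "\<dots> = rot_z a ** rot_x b ** rot_z c"
    by (simp add: P_def C_def matrix_mul_assoc flip: c)
  finally show thesis
    by (rule that)
qed

lemma continuous_on_matrix_mult [continuous_intros]:
  fixes A :: "'a::topological_space \<Rightarrow> real^'n^'m" and B :: "'a \<Rightarrow> real^'p^'n"
  assumes "continuous_on S A" "continuous_on S B"
  shows "continuous_on S (\<lambda>x. A x ** B x)"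
  unfolding matrix_matrix_mult_def
  by (intro continuous_on_vec_lambda continuous_intros assms)

lemma continuous_on_transpose [continuous_intros]:
  fixes A :: "'a::topological_space \<Rightarrow> real^'n^'m"
  assumes "continuous_on S A"
  shows "continuous_on S (\<lambda>x. transpose (A x))"
  unfolding transpose_def
  by (intro continuous_on_vec_lambda continuous_intros assms)

lemma connected_SO3: "connected SO3"
proof -
  define euler where "euler = (\<lambda>(a, b, c). rot_z a ** rot_x b ** rot_z c)"
  have "SO3 \<subseteq> euler ` UNIV"
  proof
    fix B assume "B \<in> SO3"
    then obtain a b c where "B = rot_z a ** rot_x b ** rot_z c"
      by (rule SO3_Euler_angles)
    then show "B \<in> euler ` UNIV"
      unfolding euler_def by (auto intro!: image_eqI[where x = "(a, b, c)"])
  qed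
  moreover have "euler ` UNIV \<subseteq> SO3"
    unfolding euler_def by (auto intro!: SO3_mult rot_z_in_SO3 rot_x_in_SO3)
  ultimately have "SO3 = euler ` UNIV"
    by blast
  moreover have "continuous_on UNIV euler"
    unfolding euler_def case_prod_beta
    by (intro continuous_intros continuous_on_compose2[OF continuous_on_rot_z]
        continuous_on_compose2[OF continuous_on_rot_x]) auto
  ultimately show ?thesis
    by (metis connected_UNIV connected_continuous_image)
qed

lemma continuous_coset_selection_eq_right_translation:
  assumes "connected S" "S \<subseteq> SO3" "finite G" "continuous_on S F"
    and F_coset: "\<And>R. R \<in> S \<Longrightarrow> F R \<in> pG G R"
  obtains A where "\<And>R. R \<in> S \<Longrightarrow> F R = R ** A"
proof -
  define h where "h R = transpose R ** F R" for R
  have F_eq: "F R = R ** h R" if "R \<in> S" for R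
    using \<open>S \<subseteq> SO3\<close> that by (simp add: h_def SO3_orthogonal subsetD matrix_mul_assoc)
  have "h R \<in> G" if R: "R \<in> S" for R
  proof -
    obtain A where "A \<in> G" "F R = R ** A"
      using F_coset[OF R] unfolding pG_def by blast
    then show ?thesis
      using \<open>S \<subseteq> SO3\<close> R by (simp add: h_def SO3_orthogonal subsetD matrix_mul_assoc)
  qed
  then have "finite (h ` S)"
    using \<open>finite G\<close> by (auto intro: finite_subset)
  moreover have "connected (h ` S)"
    unfolding h_def
    by (intro connected_continuous_image continuous_intros assms(1,4))
  ultimately obtain A where "h ` S \<subseteq> {A}"
    using connected_finite_iff_sing by (metis empty_subsetI order_refl)
  then show thesis
    by (intro that[of A]) (auto simp: F_eq)
qed

lemma no_continuous_coset_invariant_selection: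
  assumes G: "subgroup_SO3 G" "finite G" "G \<noteq> {mat 1}"
    and F_cont: "continuous_on SO3 F"
    and F_coset: "\<And>R. R \<in> SO3 \<Longrightarrow> F R \<in> pG G R"
    and F_invariant: "\<And>R S. R \<in> SO3 \<Longrightarrow> S \<in> SO3 \<Longrightarrow> pG G R = pG G S \<Longrightarrow> F R = F S"
  shows False
proof -
  have G_SO3: "G \<subseteq> SO3" and "mat 1 \<in> G"
    using G(1) unfolding subgroup_SO3_def by auto
  obtain A where A: "\<And>R. R \<in> SO3 \<Longrightarrow> F R = R ** A"
    using continuous_coset_selection_eq_right_translation[OF connected_SO3 order_refl G(2)
        F_cont F_coset] by blast
  obtain B where B: "B \<in> G" "B \<noteq> mat 1"
    using G(3) \<open>mat 1 \<in> G\<close> by blast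
  have "B ** A = F B"
    using A B(1) G_SO3 by (simp add: subsetD)
  also have "\<dots> = F (mat 1)"
    using B(1) G_SO3 mat_1_in_SO3 pG_of_mem[OF G(1) B(1)] pG_mat_1 by (auto intro: F_invariant)
  also have "\<dots> = mat 1 ** A"
    using A mat_1_in_SO3 by simp
  finally have "B ** A = mat 1 ** A" .
  moreover have "A \<in> SO3"
    using F_coset[OF mat_1_in_SO3] A[OF mat_1_in_SO3] G_SO3 by (auto simp: pG_mat_1)
  ultimately have "B = mat 1"
    using SO3_mult_right_cancel by blast
  with B(2) show False ..
qed

theorem corollary10:
  fixes G :: "(real^3^3) set" and g :: "real^3^3 \<Rightarrow> real^'n"
  assumes "subgroup_SO3 G" and "finite G" and "G \<noteq> {mat 1}"
    and "embedding_map SO3_top euclidean g"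
  shows "\<not> (\<exists>f. continuous_map (SO3_mod G) (subtopology euclidean (g ` SO3)) f \<and>
               (\<forall>\<R>\<in>topspace (SO3_mod G). pG G (inv_into SO3 g (f \<R>)) = \<R>))"
proof (intro notI, elim exE conjE)
  fix f
  assume f_cont: "continuous_map (SO3_mod G) (subtopology euclidean (g ` SO3)) f"
    and f_section: "\<forall>\<R>\<in>topspace (SO3_mod G). pG G (inv_into SO3 g (f \<R>)) = \<R>"
  have pG_cont: "continuous_map SO3_top (SO3_mod G) (pG G)"
    unfolding SO3_mod_def by (rule continuous_map_quotient_topology)
  have inv_cont: "continuous_map (subtopology euclidean (g ` SO3)) SO3_top (inv_into SO3 g)"
    using continuous_map_inv_into_embedding[OF assms(4)] by (simp add: SO3_top_def)
  define F where "F = inv_into SO3 g \<circ> (f \<circ> pG G)"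
  have "continuous_map SO3_top SO3_top F"
    unfolding F_def by (rule continuous_map_compose[OF continuous_map_compose[OF pG_cont f_cont] inv_cont])
  moreover have "pG G (F R) = pG G R" if "R \<in> SO3" for R
    using f_section pG_cont that unfolding F_def by (auto simp: SO3_top_def continuous_map_def)
  moreover have "mat 1 \<in> G"
    using assms(1) unfolding subgroup_SO3_def by blast
  ultimately show False
    using mem_pG_self
    by (intro no_continuous_coset_invariant_selection[OF assms(1-3), of F])
      (auto simp: SO3_top_def F_def)
qed

end
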